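(* Let $f$ be a strictly convex norm on $\mathbb{R}^n$. Then for every $\varepsilon>0$ there exists $\delta>0$ such that for every $\theta\in\partial B_f^1(0)$ and every $\xi\in B_f^1(0)\setminus B_f^1(\theta)$ satisfying $$\Xi(\xi)\in\partial B_f^1(0)\cap\left(B_f^{1+\delta}(\theta)\setminus B_f^1(\theta)\right)$$ we have $f(\xi)>1-\varepsilon$.
   Context: A norm $f$ here is a continuous function $\mathbb{R}^n\to\mathbb{R}_+$ with $f(x)=0\iff x=0$, $f(-x)=f(x)$, $f(tx)=tf(x)$ for $t\ge0$, and convex unit ball with $0$ in its interior; $f$ is strictly convex if its unit ball is strictly convex (its boundary contains no line segments). $B_f^\lambda(a)=\{y\in\mathbb{R}^n: f(y-a)\le\lambda\}$, and $\partial$ denotes the boundary. For $\xi\ne0$, $\Xi(\xi)=\xi/f(\xi)$. *)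

theory Defs
  imports "HOL-Analysis.Analysis"
begin

definition Bf :: "('a::real_vector \<Rightarrow> real) \<Rightarrow> real \<Rightarrow> 'a \<Rightarrow> 'a set" where
  "Bf f lam a = {y. f (y - a) \<le> lam}"

definition is_norm_fn :: "('a::euclidean_space \<Rightarrow> real) \<Rightarrow> bool" where
  "is_norm_fn f \<longleftrightarrow> continuous_on UNIV f
     \<and> (\<forall>x. f x \<ge> 0)
     \<and> (\<forall>x. f x = 0 \<longleftrightarrow> x = 0)
     \<and> (\<forall>x. f (- x) = f x)
     \<and> (\<forall>x t. t \<ge> 0 \<longrightarrow> f (t *\<^sub>R x) = t * f x)
     \<and> convex (Bf f 1 0)
     \<and> 0 \<in> interior (Bf f 1 0)"

definition strictly_convex_norm :: "('a::euclidean_space \<Rightarrow> real) \<Rightarrow> bool" where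
  "strictly_convex_norm f \<longleftrightarrow> is_norm_fn f
     \<and> (\<forall>x y. x \<noteq> y \<longrightarrow> \<not> closed_segment x y \<subseteq> frontier (Bf f 1 0))"

definition Xi :: "('a::real_vector \<Rightarrow> real) \<Rightarrow> 'a \<Rightarrow> 'a" where
  "Xi f \<xi> = (1 / f \<xi>) *\<^sub>R \<xi>"

end

theory Submission
  imports Defs
begin

(* For unit vectors theta and eta the function g s = f (s eta - theta) is convex with g 0 = 1.
   If f xi <= c < 1 but f (xi - theta) > 1, convexity of g on [0, c] (with eta = Xi f xi) gives
   g c >= 1.  Strict convexity forbids g c >= 1 together with g 1 <= 1: g would attain its
   maximum over [0, 1] at the interior point c and hence be constant, putting the segment from
   -theta to eta - theta on the unit sphere.  By compactness of the unit sphere, g 1 = f (eta - theta)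
   therefore exceeds 1 by a uniform margin delta, contradicting f (Xi f xi - theta) <= 1 + delta. *)

lemma is_norm_fnD:
  assumes "is_norm_fn (f :: 'a::euclidean_space \<Rightarrow> real)"
  shows "continuous_on UNIV f" "f x \<ge> 0" "f x = 0 \<longleftrightarrow> x = 0" "f (- x) = f x"
    "t \<ge> 0 \<Longrightarrow> f (t *\<^sub>R x) = t * f x" "convex {y. f y \<le> 1}"
  using assms unfolding is_norm_fn_def Bf_def by auto

lemma strictly_convex_norm_imp_is_norm_fn: "strictly_convex_norm f \<Longrightarrow> is_norm_fn f"
  unfolding strictly_convex_norm_def by simp

lemma is_norm_fn_pos: "is_norm_fn f \<Longrightarrow> x \<noteq> 0 \<Longrightarrow> f x > 0"
  using is_norm_fnD(2,3) by (metis less_eq_real_def)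

lemma is_norm_fn_triangle:
  assumes f: "is_norm_fn (f :: 'a::euclidean_space \<Rightarrow> real)"
  shows "f (x + y) \<le> f x + f y"
proof (cases "x = 0 \<or> y = 0")
  case True
  then show ?thesis using is_norm_fnD[OF f] by auto
next
  case False
  define a b where "a = f x" and "b = f y"
  have a: "a > 0" and b: "b > 0" using False is_norm_fn_pos[OF f] unfolding a_def b_def by auto
  have "(1/a) *\<^sub>R x \<in> {y. f y \<le> 1}" "(1/b) *\<^sub>R y \<in> {y. f y \<le> 1}"
    using a b is_norm_fnD(5)[OF f] unfolding a_def b_def by auto
  then have "(a/(a+b)) *\<^sub>R ((1/a) *\<^sub>R x) + (b/(a+b)) *\<^sub>R ((1/b) *\<^sub>R y) \<in> {y. f y \<le> 1}"
    using a b by (intro convexD[OF is_norm_fnD(6)[OF f]]) (auto simp: add_divide_distrib[symmetric])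
  moreover have "(a/(a+b)) *\<^sub>R ((1/a) *\<^sub>R x) + (b/(a+b)) *\<^sub>R ((1/b) *\<^sub>R y) = (1/(a+b)) *\<^sub>R (x + y)"
    using a b by (simp add: scaleR_add_right)
  ultimately have "f (x + y) / (a + b) \<le> 1"
    using a b is_norm_fnD(5)[OF f, of "1/(a+b)"] by simp
  then show ?thesis using a b unfolding a_def b_def by (simp add: divide_simps)
qed

lemma convex_on_is_norm_fn_line:
  assumes f: "is_norm_fn (f :: 'a::euclidean_space \<Rightarrow> real)"
  shows "convex_on UNIV (\<lambda>s. f (s *\<^sub>R \<eta> - \<theta>))"
proof (rule convex_onI)
  fix u a b :: real assume u: "0 < u" "u < 1"
  have "((1-u) *\<^sub>R a + u *\<^sub>R b) *\<^sub>R \<eta> - \<theta> = (1-u) *\<^sub>R (a *\<^sub>R \<eta> - \<theta>) + u *\<^sub>R (b *\<^sub>R \<eta> - \<theta>)"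
    by (simp add: algebra_simps)
  also have "f \<dots> \<le> f ((1-u) *\<^sub>R (a *\<^sub>R \<eta> - \<theta>)) + f (u *\<^sub>R (b *\<^sub>R \<eta> - \<theta>))"
    by (rule is_norm_fn_triangle[OF f])
  also have "\<dots> = (1-u) * f (a *\<^sub>R \<eta> - \<theta>) + u * f (b *\<^sub>R \<eta> - \<theta>)"
    using u by (simp add: is_norm_fnD(5)[OF f])
  finally show "f (((1-u) *\<^sub>R a + u *\<^sub>R b) *\<^sub>R \<eta> - \<theta>) \<le> (1-u) * f (a *\<^sub>R \<eta> - \<theta>) + u * f (b *\<^sub>R \<eta> - \<theta>)" .
qed simp

lemma convex_on_eq_interior_max:
  fixes g :: "real \<Rightarrow> real"
  assumes g: "convex_on {a..b} g" and c: "a < c" "c < b"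
    and max: "g a \<le> g c" "g b \<le> g c" and s: "s \<in> {a..b}"
  shows "g s = g c"
proof -
  have "g s \<le> g c" using convex_on_le_max[OF g s] max by simp
  moreover have "g c \<le> g s"
  proof (cases s c rule: linorder_cases)
    case less
    then have "(g s - g c) / (s - c) \<le> (g c - g b) / (c - b)"
      using convex_on_slope_le[OF g, of s b c] s c by auto
    moreover have "(g c - g b) / (c - b) \<le> 0" using c max by (simp add: divide_nonneg_neg)
    ultimately have "(g s - g c) / (s - c) \<le> 0" by linarith
    with less show ?thesis by (simp add: divide_le_0_iff)
  next
    case greater
    then have "(g a - g c) / (a - c) \<le> (g c - g s) / (c - s)"
      using convex_on_slope_le[OF g, of a s c] s c by auto
    moreover have "0 \<le> (g a - g c) / (a - c)" using c max by (simp add: divide_nonpos_neg)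
    ultimately have "0 \<le> (g c - g s) / (c - s)" by linarith
    with greater show ?thesis by (simp add: zero_le_divide_iff)
  qed simp
  ultimately show ?thesis by simp
qed

lemma interior_is_norm_fn_unit_ball:
  assumes f: "is_norm_fn (f :: 'a::euclidean_space \<Rightarrow> real)"
  shows "interior {x. f x \<le> 1} = {x. f x < 1}"
proof
  show "{x. f x < 1} \<subseteq> interior {x. f x \<le> 1}"
    using open_Collect_less[OF is_norm_fnD(1)[OF f] continuous_on_const]
    by (intro interior_maximal) auto
  show "interior {x. f x \<le> 1} \<subseteq> {x. f x < 1}"
  proof
    fix x assume "x \<in> interior {x. f x \<le> 1}"
    then obtain e where e: "e > 0" "ball x e \<subseteq> {x. f x \<le> 1}"
      unfolding mem_interior by blast
    show "x \<in> {x. f x < 1}"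
    proof (cases "x = 0")
      case True
      then show ?thesis using is_norm_fnD(3)[OF f, of 0] by simp
    next
      case False
      define k where "k = e / (2 * norm x)"
      have k: "k > 0" using e False unfolding k_def by simp
      have "dist x ((1 + k) *\<^sub>R x) = e / 2"
        using False e unfolding k_def dist_norm by (simp add: algebra_simps)
      then have "(1 + k) *\<^sub>R x \<in> ball x e" using e(1) by simp
      then have "(1 + k) * f x \<le> 1"
        using e(2) k is_norm_fnD(5)[OF f, of "1 + k" x] by auto
      moreover have "k * f x > 0" using k is_norm_fn_pos[OF f False] by simp
      ultimately show ?thesis by (simp add: algebra_simps)
    qed
  qed
qed

lemma frontier_is_norm_fn_unit_ball:
  assumes f: "is_norm_fn (f :: 'a::euclidean_space \<Rightarrow> real)"
  shows "frontier (Bf f 1 0) = {x. f x = 1}"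
proof -
  have "closed {x. f x \<le> 1}"
    using closed_Collect_le[OF is_norm_fnD(1)[OF f] continuous_on_const] by simp
  then show ?thesis
    unfolding Bf_def frontier_def using interior_is_norm_fn_unit_ball[OF f] by auto
qed

lemma is_norm_fn_ge_norm:
  assumes f: "is_norm_fn (f :: 'a::euclidean_space \<Rightarrow> real)"
  obtains m where "m > 0" "\<And>x. m * norm x \<le> f x"
proof -
  obtain b :: 'a where "b \<in> Basis" using nonempty_Basis by blast
  then have "sphere (0::'a) 1 \<noteq> {}" by (metis norm_Basis mem_sphere_0 empty_iff)
  then obtain x0 where x0: "x0 \<in> sphere 0 1" "\<And>y. y \<in> sphere 0 1 \<Longrightarrow> f x0 \<le> f y"
    using continuous_attains_inf[OF compact_sphere _ continuous_on_subset[OF is_norm_fnD(1)[OF f]]]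
    by blast
  have "f x0 * norm x \<le> f x" for x
  proof (cases "x = 0")
    case False
    then have "f x0 \<le> f ((1 / norm x) *\<^sub>R x)" by (intro x0(2)) simp
    also have "\<dots> = f x / norm x" using is_norm_fnD(5)[OF f, of "1 / norm x" x] by simp
    finally show ?thesis using False by (simp add: field_simps)
  qed (simp add: is_norm_fnD(2)[OF f])
  moreover have "f x0 > 0" using x0(1) by (intro is_norm_fn_pos[OF f]) auto
  ultimately show thesis using that by blast
qed

lemma compact_is_norm_fn_unit_sphere:
  assumes f: "is_norm_fn (f :: 'a::euclidean_space \<Rightarrow> real)"
  shows "compact {x. f x = 1}"
proof -
  obtain m where m: "m > 0" "\<And>x. m * norm x \<le> f x" using is_norm_fn_ge_norm[OF f] by blast
  have "norm x \<le> 1 / m" if "f x = 1" for x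
    using m(2)[of x] m(1) that by (simp add: field_simps)
  then have "{x. f x = 1} \<subseteq> cball 0 (1 / m)" by auto
  moreover have "closed {x. f x = 1}"
    using closed_Collect_eq[OF is_norm_fnD(1)[OF f] continuous_on_const] by simp
  ultimately show ?thesis
    using bounded_subset[OF bounded_cball] compact_eq_bounded_closed by blast
qed

lemma is_norm_fn_Xi: "is_norm_fn f \<Longrightarrow> \<xi> \<noteq> 0 \<Longrightarrow> f (Xi f \<xi>) = 1"
  using is_norm_fn_pos[of f \<xi>] is_norm_fnD(5)[of f "1 / f \<xi>" \<xi>] unfolding Xi_def by simp

lemma is_norm_fn_scaleR_Xi: "is_norm_fn f \<Longrightarrow> \<xi> \<noteq> 0 \<Longrightarrow> f \<xi> *\<^sub>R Xi f \<xi> = \<xi>"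
  using is_norm_fn_pos[of f \<xi>] unfolding Xi_def by simp

lemma is_norm_fn_ray_gt:
  assumes f: "is_norm_fn (f :: 'a::euclidean_space \<Rightarrow> real)"
    and t: "0 \<le> t" "t \<le> c" and gt: "f \<theta> < f (t *\<^sub>R \<eta> - \<theta>)"
  shows "f \<theta> < f (c *\<^sub>R \<eta> - \<theta>)"
proof -
  have "convex_on {0..c} (\<lambda>s. f (s *\<^sub>R \<eta> - \<theta>))"
    using convex_on_subset[OF convex_on_is_norm_fn_line[OF f]] by simp
  then have "f (t *\<^sub>R \<eta> - \<theta>) \<le> max (f (0 *\<^sub>R \<eta> - \<theta>)) (f (c *\<^sub>R \<eta> - \<theta>))"
    using t by (intro convex_on_le_max) auto
  then show ?thesis using gt is_norm_fnD(4)[OF f, of \<theta>] by simp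
qed

lemma strictly_convex_norm_chord_gt:
  fixes f :: "'a::euclidean_space \<Rightarrow> real"
  assumes sc: "strictly_convex_norm f" and unit: "f \<theta> = 1" "f \<eta> = 1"
    and c: "0 < c" "c < 1" and gc: "1 \<le> f (c *\<^sub>R \<eta> - \<theta>)"
  shows "1 < f (\<eta> - \<theta>)"
proof (rule ccontr)
  assume "\<not> 1 < f (\<eta> - \<theta>)"
  have f: "is_norm_fn f" using sc by (rule strictly_convex_norm_imp_is_norm_fn)
  define g where "g s = f (s *\<^sub>R \<eta> - \<theta>)" for s
  have g0: "g 0 = 1" using unit is_norm_fnD(4)[OF f, of \<theta>] unfolding g_def by simp
  have "convex_on {0..1} g"
    using convex_on_subset[OF convex_on_is_norm_fn_line[OF f]] unfolding g_def by simp
  then have "g s = g c" if "s \<in> {0..1}" for s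
    using convex_on_eq_interior_max[of 0 1 g c s] that c g0 gc \<open>\<not> 1 < f (\<eta> - \<theta>)\<close>
    unfolding g_def by simp
  then have g1: "g s = 1" if "s \<in> {0..1}" for s using that g0 by force
  have "closed_segment (- \<theta>) (\<eta> - \<theta>) \<subseteq> frontier (Bf f 1 0)"
  proof
    fix z assume "z \<in> closed_segment (- \<theta>) (\<eta> - \<theta>)"
    then obtain u where "u \<in> {0..1}" "z = u *\<^sub>R \<eta> - \<theta>"
      unfolding closed_segment_def by (auto simp: algebra_simps)
    then show "z \<in> frontier (Bf f 1 0)"
      using g1[of u] unfolding frontier_is_norm_fn_unit_ball[OF f] g_def by simp
  qed
  moreover have "- \<theta> \<noteq> \<eta> - \<theta>" using unit is_norm_fnD(3)[OF f, of \<eta>] by auto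
  ultimately show False using sc unfolding strictly_convex_norm_def by blast
qed

lemma strictly_convex_norm_uniform_chord_gt:
  fixes f :: "'a::euclidean_space \<Rightarrow> real"
  assumes sc: "strictly_convex_norm f" and c: "0 < c" "c < 1"
  obtains \<delta> where "\<delta> > 0"
    "\<And>\<theta> \<eta>. f \<theta> = 1 \<Longrightarrow> f \<eta> = 1 \<Longrightarrow> 1 \<le> f (c *\<^sub>R \<eta> - \<theta>) \<Longrightarrow> 1 + \<delta> < f (\<eta> - \<theta>)"
proof -
  have f: "is_norm_fn f" using sc by (rule strictly_convex_norm_imp_is_norm_fn)
  have cont: "continuous_on UNIV f" by (rule is_norm_fnD(1)[OF f])
  define K where "K = ({x. f x = 1} \<times> {x. f x = 1}) \<inter> {p. 1 \<le> f (c *\<^sub>R snd p - fst p)}"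
  have "closed {p :: 'a \<times> 'a. 1 \<le> f (c *\<^sub>R snd p - fst p)}"
    by (intro closed_Collect_le continuous_on_const continuous_on_compose2[OF cont])
      (auto intro!: continuous_intros)
  then have "compact K"
    unfolding K_def using compact_is_norm_fn_unit_sphere[OF f]
    by (intro compact_Int_closed compact_Times)
  have in_K: "(\<theta>, \<eta>) \<in> K" if "f \<theta> = 1" "f \<eta> = 1" "1 \<le> f (c *\<^sub>R \<eta> - \<theta>)" for \<theta> \<eta>
    using that by (simp add: K_def)
  show thesis
  proof (cases "K = {}")
    case True
    show thesis
    proof (rule that)
      fix \<theta> \<eta> assume "f \<theta> = 1" "f \<eta> = 1" "1 \<le> f (c *\<^sub>R \<eta> - \<theta>)"
      with True show "1 + 1 < f (\<eta> - \<theta>)" using in_K by blast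
    qed simp
  next
    case False
    have "continuous_on K (\<lambda>p. f (snd p - fst p))"
      by (intro continuous_on_compose2[OF cont]) (auto intro!: continuous_intros)
    then obtain p0 where p0: "p0 \<in> K" "\<And>p. p \<in> K \<Longrightarrow> f (snd p0 - fst p0) \<le> f (snd p - fst p)"
      using continuous_attains_inf[OF \<open>compact K\<close> False] by blast
    define m where "m = f (snd p0 - fst p0)"
    have "1 < m"
      unfolding m_def using p0(1) c by (intro strictly_convex_norm_chord_gt[OF sc]) (auto simp: K_def)
    show thesis
    proof (rule that)
      show "(m - 1) / 2 > 0" using \<open>1 < m\<close> by simp
      fix \<theta> \<eta> assume "f \<theta> = 1" "f \<eta> = 1" "1 \<le> f (c *\<^sub>R \<eta> - \<theta>)"
      then have "m \<le> f (\<eta> - \<theta>)" unfolding m_def using p0(2)[OF in_K] by simp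
      then show "1 + (m - 1) / 2 < f (\<eta> - \<theta>)" using \<open>1 < m\<close> by (simp add: field_simps)
    qed
  qed
qed

lemma strictly_convex_norm_Xi_near_gt:
  fixes f :: "'a::euclidean_space \<Rightarrow> real"
  assumes sc: "strictly_convex_norm f" and c: "0 < c" "c < 1"
  obtains \<delta> where "\<delta> > 0"
    "\<And>\<theta> \<xi>. f \<theta> = 1 \<Longrightarrow> 1 < f (\<xi> - \<theta>) \<Longrightarrow> \<xi> \<noteq> 0 \<Longrightarrow> f (Xi f \<xi> - \<theta>) \<le> 1 + \<delta> \<Longrightarrow> c < f \<xi>"
proof -
  have f: "is_norm_fn f" using sc by (rule strictly_convex_norm_imp_is_norm_fn)
  obtain \<delta> where \<delta>: "\<delta> > 0"
    "\<And>\<theta> \<eta>. f \<theta> = 1 \<Longrightarrow> f \<eta> = 1 \<Longrightarrow> 1 \<le> f (c *\<^sub>R \<eta> - \<theta>) \<Longrightarrow> 1 + \<delta> < f (\<eta> - \<theta>)"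
    using strictly_convex_norm_uniform_chord_gt[OF sc c] by blast
  have "c < f \<xi>" if "f \<theta> = 1" "1 < f (\<xi> - \<theta>)" "\<xi> \<noteq> 0" "f (Xi f \<xi> - \<theta>) \<le> 1 + \<delta>" for \<theta> \<xi>
  proof (rule ccontr)
    assume "\<not> c < f \<xi>"
    then have "f \<xi> \<le> c" by simp
    moreover have "f \<theta> < f (f \<xi> *\<^sub>R Xi f \<xi> - \<theta>)"
      using that(1,2) is_norm_fn_scaleR_Xi[OF f that(3)] by simp
    ultimately have "f \<theta> < f (c *\<^sub>R Xi f \<xi> - \<theta>)"
      by (rule is_norm_fn_ray_gt[OF f is_norm_fnD(2)[OF f]])
    then have "1 + \<delta> < f (Xi f \<xi> - \<theta>)"
      using that(1) is_norm_fn_Xi[OF f that(3)] by (intro \<delta>(2)) simp_all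
    then show False using that(4) by simp
  qed
  with \<delta>(1) show thesis using that by blast
qed

theorem lemma2p3:
  fixes f :: "real ^ 'n \<Rightarrow> real"
  assumes "strictly_convex_norm f"
  shows "\<forall>\<epsilon>>0. \<exists>\<delta>>0. \<forall>\<theta> \<xi>.
           \<theta> \<in> frontier (Bf f 1 0)
           \<longrightarrow> \<xi> \<in> Bf f 1 0 - Bf f 1 \<theta>
           \<longrightarrow> \<xi> \<noteq> 0
           \<longrightarrow> Xi f \<xi> \<in> frontier (Bf f 1 0) \<inter> (Bf f (1 + \<delta>) \<theta> - Bf f 1 \<theta>)
           \<longrightarrow> f \<xi> > 1 - \<epsilon>"
proof (intro allI impI)
  fix \<epsilon> :: real assume "\<epsilon> > 0"
  have f: "is_norm_fn f" using assms by (rule strictly_convex_norm_imp_is_norm_fn)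
  \<comment> \<open>for \<open>\<epsilon> \<ge> 1\<close> the claim is trivial, but \<open>c\<close> must lie in \<open>(0, 1)\<close>\<close>
  define c where "c = max (1 - \<epsilon>) (1 / 2)"
  have "0 < c" "c < 1" using \<open>\<epsilon> > 0\<close> unfolding c_def by auto
  then obtain \<delta> where \<delta>: "\<delta> > 0"
    "\<And>\<theta> \<xi>. f \<theta> = 1 \<Longrightarrow> 1 < f (\<xi> - \<theta>) \<Longrightarrow> \<xi> \<noteq> 0 \<Longrightarrow> f (Xi f \<xi> - \<theta>) \<le> 1 + \<delta> \<Longrightarrow> c < f \<xi>"
    using strictly_convex_norm_Xi_near_gt[OF assms] by blast
  show "\<exists>\<delta>>0. \<forall>\<theta> \<xi>. \<theta> \<in> frontier (Bf f 1 0) \<longrightarrow> \<xi> \<in> Bf f 1 0 - Bf f 1 \<theta> \<longrightarrow> \<xi> \<noteq> 0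
    \<longrightarrow> Xi f \<xi> \<in> frontier (Bf f 1 0) \<inter> (Bf f (1 + \<delta>) \<theta> - Bf f 1 \<theta>) \<longrightarrow> f \<xi> > 1 - \<epsilon>"
  proof (intro exI[of _ \<delta>] conjI allI impI \<delta>(1))
    fix \<theta> \<xi> assume "\<theta> \<in> frontier (Bf f 1 0)" "\<xi> \<in> Bf f 1 0 - Bf f 1 \<theta>" "\<xi> \<noteq> 0"
      "Xi f \<xi> \<in> frontier (Bf f 1 0) \<inter> (Bf f (1 + \<delta>) \<theta> - Bf f 1 \<theta>)"
    then have "c < f \<xi>"
      unfolding frontier_is_norm_fn_unit_ball[OF f] unfolding Bf_def by (intro \<delta>(2)) auto
    then show "f \<xi> > 1 - \<epsilon>" unfolding c_def by simp
  qed
qed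

end
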